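(* Assume the axiomatic setting described in the context, with Axioms (A1)–(A4). Suppose that for some $1\le p<\infty$ and $\beta>0$ with $Q-(\beta+\theta)p>0$ there is $C=C_{p,\beta}>0$ such that $$\nu(\{u\in Y:(\chi_E)^d_\delta(u)>\lambda\})\le C\lambda^{-p}\delta^{-\beta p}\mu(E)$$ for every $\mu$-measurable $E\subset X$, every $\lambda>0$ and every $0<\delta<1$. Then the Hausdorff dimension with respect to $d$ of every generalized Kakeya set in $X$ is at least $Q-(\beta+\theta)p$.
   Context: Let $(X,d)$ be a complete separable metric space with a Borel measure $\mu$ and constants $Q>1/2$, $C_0\in(0,\infty)$ such that $\mu(B_d(x,r))\le C_0r^Q$ for all $x\in X$ and $0<r<\mathrm{diam}_d(X)$ ($B_d$ closed balls). Let $d'$ be a second metric on $X$ with $(X,d')$ separable. Let $(Z,d_Z)$ be a metric space, $Y\subset Z$ compact, $\nu$ a Borel measure on $Z$ with $0<\nu(Y)\le1$, and $1\le S<2Q$, $0<\tilde c_0\le\tilde C_0$ with $\tilde c_0r^S\le\nu(B_{d_Z}(u,r))\le\tilde C_0r^S$ for $u\in Y$, $0<r<\mathrm{diam}_{d_Z}(Y)$. Let $\mathcal A$ be a set of parameters; to each $a\in\mathcal A$, $u\in Y$ are associated $F_u(a)\subset I_u(a)\subset\tilde I_u(a)\subset X$ with $c\le\mathrm{diam}_{d'}I_u(a)\le c'$, $\mathrm{diam}_{d'}\tilde I_u(a)\le\bar c\,\mathrm{diam}_{d'}I_u(a)$ (constants $0<c\le c'$, $\bar c\ge1$), and a measure $\mu_{u,a}$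 on $F_u(a)$ with total mass $1$, doubling with a uniform constant: $\mu_{u,a}(F_u(a)\cap B_d(x,2r))\le C\mu_{u,a}(F_u(a)\cap B_d(x,r))$ for $x\in F_u(a)$. For $0<\delta<1$, $T^\delta_u(a)=\{x:d(x,I_u(a))\le\delta\}$, $\tilde T^{W\delta}_u(a)=\{x:d(x,\tilde I_u(a))\le W\delta\}$, with $W$ from (A4). Axioms: (A1) $u\mapsto\mu(T^\delta_u(a))$ is continuous on $Y$; there are $S/2<T<Q$, $0<c_1\le c_2$ with $c_1\delta^T\le\mu(T^\delta_u(a))\le\mu(\tilde T^{W\delta}_u(a))\le c_2\delta^T$, and $\mu(A)\le c_2\,\mathrm{diam}_{d'}(A)\delta^T$ for $A\subset\tilde T^{W\delta}_u(a)$. (A2) There are $0\le\theta<\frac{2Q-2T+S}{S+2}$, $K'>0$, $K\ge1$ such that for all $a,u$, $x\in F_u(a)$, $\delta\le r\le2\delta$: if $\mu_{u,a}(F_u(a)\cap B_d(x,r))=M>0$ then $\mu(T^\delta_u(a)\cap B_d(x,Kr))\ge K'M\delta^\theta\mu(T^\delta_u(a))$. (A3) There is $b>0$ with $\mathrm{diam}_{d'}(\tilde T^{W\delta}_u(a)\cap\tilde T^{W\delta}_v(a'))\le b\delta/d_Z(u,v)$. (A4) There are $0<W,\bar N<\infty$ such that if $d_Z(u,v)\le\delta$, $a\in\mathcal A$, then $T^\delta_u(a)$ is covered by at most $\bar N$ tubes $\tilde T^{W\delta}_v(b_k)$, $b_k\in\mathcal A$. A generalized Kakeya set is $B\subset X$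 with $\mu(B)=0$ such that each $u\in Y$ has some $a\in\mathcal A$ with $F_u(a)\subset B$. For $f\in L^1_{loc}(X,\mu)$, $f^d_\delta(u)=\sup_{a\in\mathcal A}\frac1{\mu(T^\delta_u(a))}\int_{T^\delta_u(a)}|f|\,d\mu$; $\chi_E$ is the indicator of $E$. *)

theory Defs
  imports "HOL-Analysis.Analysis"
begin

definition ediam :: "('a \<Rightarrow> 'a \<Rightarrow> real) \<Rightarrow> 'a set \<Rightarrow> ennreal" where
  "ediam d A = (SUP x\<in>A. SUP y\<in>A. ennreal (d x y))"

definition setdist_pt :: "('a \<Rightarrow> 'a \<Rightarrow> real) \<Rightarrow> 'a \<Rightarrow> 'a set \<Rightarrow> real" where
  "setdist_pt d x A = (INF y\<in>A. d x y)"

definition cball_d :: "('a \<Rightarrow> 'a \<Rightarrow> real) \<Rightarrow> 'a \<Rightarrow> real \<Rightarrow> 'a set" where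
  "cball_d d x r = {y. d x y \<le> r}"

definition metric_borel :: "('a \<Rightarrow> 'a \<Rightarrow> real) \<Rightarrow> 'a measure" where
  "metric_borel d = sigma UNIV {U. openin (Metric_space.mtopology UNIV d) U}"

definition hausdorff_pre :: "('a \<Rightarrow> 'a \<Rightarrow> real) \<Rightarrow> real \<Rightarrow> real \<Rightarrow> 'a set \<Rightarrow> ennreal" where
  "hausdorff_pre d s eps A =
     (INF C \<in> {C :: nat \<Rightarrow> 'a set. A \<subseteq> (\<Union>i. C i) \<and> (\<forall>i. ediam d (C i) \<le> ennreal eps)}.
        (\<Sum>i. (if C i = {} then 0 else ennreal ((enn2real (ediam d (C i))) powr s))))"

definition hausdorff_measure :: "('a \<Rightarrow> 'a \<Rightarrow> real) \<Rightarrow> real \<Rightarrow> 'a set \<Rightarrow> ennreal" where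
  "hausdorff_measure d s A = (SUP eps\<in>{0<..}. hausdorff_pre d s eps A)"

definition hausdorff_dim :: "('a \<Rightarrow> 'a \<Rightarrow> real) \<Rightarrow> 'a set \<Rightarrow> ereal" where
  "hausdorff_dim d A = Inf (ereal ` {s. 0 < s \<and> hausdorff_measure d s A = 0})"

definition tube :: "('a \<Rightarrow> 'a \<Rightarrow> real) \<Rightarrow> ('z \<Rightarrow> 'p \<Rightarrow> 'a set) \<Rightarrow> real \<Rightarrow> 'z \<Rightarrow> 'p \<Rightarrow> 'a set" where
  "tube d I delta u a = {x. setdist_pt d x (I u a) \<le> delta}"

definition kakeya_maximal ::
  "'a measure \<Rightarrow> ('a \<Rightarrow> 'a \<Rightarrow> real) \<Rightarrow> 'p set \<Rightarrow> ('z \<Rightarrow> 'p \<Rightarrow> 'a set)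
     \<Rightarrow> ('a \<Rightarrow> real) \<Rightarrow> real \<Rightarrow> 'z \<Rightarrow> ennreal" where
  "kakeya_maximal mu d Par I f delta u =
     (SUP a\<in>Par. ennreal (1 / measure mu (tube d I delta u a)) *
        (\<integral>\<^sup>+ x. ennreal \<bar>f x\<bar> * indicator (tube d I delta u a) x \<partial>(completion mu)))"

definition generalized_kakeya ::
  "'a measure \<Rightarrow> 'z set \<Rightarrow> 'p set \<Rightarrow> ('z \<Rightarrow> 'p \<Rightarrow> 'a set) \<Rightarrow> 'a set \<Rightarrow> bool" where
  "generalized_kakeya mu Y Par F B \<longleftrightarrow>
     B \<in> null_sets (completion mu) \<and> (\<forall>u\<in>Y. \<exists>a\<in>Par. F u a \<subseteq> B)"

end

theory Submission
  imports Defs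
begin

text \<open>Suppose \<open>H\<^sup>s(B) = 0\<close> for some \<open>s < Q - (\<beta> + \<theta>) p\<close>. Cover \<open>B\<close> by balls \<open>B(x_i, r_i)\<close> with
  \<open>\<Sum> r_i\<^sup>s\<close> small and sort the balls into dyadic bands \<open>\<delta>_k \<le> r_i < 2 \<delta>_k\<close>, \<open>\<delta>_k = 2\<^sup>-\<^sup>k\<^sup>-\<^sup>1\<close>.
  Each \<open>F_u(a) \<subseteq> B\<close> has \<open>\<mu>_u_a\<close>-mass 1, so the balls of some band \<open>k\<close> carry \<open>\<mu>_u_a\<close>-mass at least
  \<open>m_k \<approx> \<delta>_k\<^sup>\<gamma>\<close>, where \<open>\<gamma> p = Q - (\<beta> + \<theta>) p - s\<close>. A maximal separated subfamily of them,
  the doubling of \<open>\<mu>_u_a\<close> and (A2) show that the tube of width \<open>\<delta>_k\<close> around \<open>I_u(a)\<close> meets the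
  union \<open>E_k\<close> of the enlarged band-\<open>k\<close> balls in proportion \<open>\<gtrsim> \<delta>_k\<^sup>\<theta> m_k\<close>, so \<open>u\<close> lies in a
  superlevel set of the maximal function of \<open>\<chi>(E_k)\<close> at scale \<open>\<delta>_k\<close>. Summing the maximal
  inequality over the bands, with \<open>\<mu>(E_k) \<le> C\<^sub>0 \<Sum> r_i\<^sup>Q\<close>, bounds \<open>\<nu>(Y)\<close> by a multiple of
  \<open>\<Sum> r_i\<^sup>s\<close>, a contradiction.\<close>

lemma space_metric_borel [simp]: "space (metric_borel d) = UNIV"
  unfolding metric_borel_def by (simp add: space_measure_of)

lemma cball_d_in_metric_borel:
  assumes "Metric_space UNIV d"
  shows "cball_d d x r \<in> sets (metric_borel d)"
proof -
  interpret Metric_space UNIV d by fact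
  have "openin mtopology (- mcball x r)"
    using closedin_mcball[of x r] by (simp add: closedin_def Compl_eq_Diff_UNIV)
  then have "UNIV - (- mcball x r) \<in> sigma_sets UNIV {U. openin mtopology U}"
    by (intro sigma_sets.Compl sigma_sets.Basic) simp
  then show ?thesis
    by (simp add: metric_borel_def sets_measure_of cball_d_def mcball_def)
qed

lemma outer_measure_of_countable_subadditive:
  assumes "\<And>k. A k \<subseteq> space M"
  shows "outer_measure_of M (\<Union>k. A k) \<le> (\<Sum>k. outer_measure_of M (A k))"
proof -
  have "\<forall>k. \<exists>E\<in>sets M. A k \<subseteq> E \<and> outer_measure_of M (A k) = emeasure M E"
    using outer_measure_of_attain[OF assms] by blast
  then obtain E where E: "\<And>k. E k \<in> sets M" "\<And>k. A k \<subseteq> E k"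
    "\<And>k. outer_measure_of M (A k) = emeasure M (E k)"
    by metis
  have "outer_measure_of M (\<Union>k. A k) \<le> outer_measure_of M (\<Union>k. E k)"
    using E(2) by (intro outer_measure_of_mono) blast
  also have "\<dots> = emeasure M (\<Union>k. E k)"
    using E(1) by (intro outer_measure_of_eq) auto
  also have "\<dots> \<le> (\<Sum>k. emeasure M (E k))"
    using E(1) by (intro emeasure_subadditive_countably) auto
  finally show ?thesis using E(3) by simp
qed

lemma suminf_ennreal_commute:
  fixes f :: "nat \<Rightarrow> nat \<Rightarrow> ennreal"
  shows "(\<Sum>k. \<Sum>i. f k i) = (\<Sum>i. \<Sum>k. f k i)"
proof -
  have "(\<Sum>k. \<Sum>i. f k i) = (\<Sum>k. SUP n. \<Sum>i<n. f k i)"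
    by (simp add: suminf_eq_SUP)
  also have "\<dots> = (SUP n. \<Sum>k. \<Sum>i<n. f k i)"
    by (rule ennreal_suminf_SUP_eq) (auto simp: incseq_def intro!: sum_mono2)
  also have "\<dots> = (SUP n. \<Sum>i<n. \<Sum>k. f k i)"
    by (subst suminf_sum) (auto intro: summableI)
  also have "\<dots> = (\<Sum>i. \<Sum>k. f k i)"
    by (simp add: suminf_eq_SUP[of "\<lambda>i. \<Sum>k. f k i"])
  finally show ?thesis .
qed

lemma suminf_ennreal_partition:
  fixes f :: "nat \<Rightarrow> ennreal"
  assumes "\<And>i. \<exists>!k. i \<in> J k"
  shows "(\<Sum>k. \<Sum>i. if i \<in> J k then f i else 0) = (\<Sum>i. f i)"
proof -
  have single: "(\<Sum>k. if i \<in> J k then f i else 0) = f i" for i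
proof -
    obtain k0 where k0: "i \<in> J k0" "\<And>k. i \<in> J k \<Longrightarrow> k = k0"
      using assms[of i] by (auto simp: Ex1_def)
    then have "i \<in> J k \<longleftrightarrow> k = k0" for k by blast
    then have "(\<lambda>k. if i \<in> J k then f i else 0) = (\<lambda>k. if k = k0 then f i else 0)"
      by simp
    moreover have "(\<lambda>k. if k = k0 then f i else 0) sums f i"
      using sums_single[of k0 "\<lambda>_. f i"] by simp
    ultimately show ?thesis by (simp add: sums_iff)
  qed
  have "(\<Sum>k. \<Sum>i. if i \<in> J k then f i else 0) = (\<Sum>i. \<Sum>k. if i \<in> J k then f i else 0)"
    by (rule suminf_ennreal_commute)
  also have "\<dots> = (\<Sum>i. f i)" using single by simp
  finally show ?thesis .
qed

lemma exists_finite_subfamily_emeasure_gt: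
  fixes A :: "nat \<Rightarrow> 'a set"
  assumes "\<And>i. i \<in> J \<Longrightarrow> A i \<in> sets M" "m < emeasure M (\<Union>i\<in>J. A i)"
  shows "\<exists>P\<subseteq>J. finite P \<and> m < emeasure M (\<Union>i\<in>P. A i)"
proof -
  have "(\<Union>i\<in>J. A i) = (\<Union>n. \<Union>i\<in>J \<inter> {..<n}. A i)" by auto
  moreover have "(SUP n. emeasure M (\<Union>i\<in>J \<inter> {..<n}. A i)) = emeasure M (\<Union>n. \<Union>i\<in>J \<inter> {..<n}. A i)"
    using assms(1) by (intro SUP_emeasure_incseq) (auto simp: incseq_def)
  ultimately have "m < (SUP n. emeasure M (\<Union>i\<in>J \<inter> {..<n}. A i))"
    using assms(2) by simp
  then obtain n where "m < emeasure M (\<Union>i\<in>J \<inter> {..<n}. A i)"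
    by (auto simp: less_SUP_iff)
  then show ?thesis by (intro exI[of _ "J \<inter> {..<n}"]) auto
qed

lemma exists_emeasure_Int_gt_of_suminf_less:
  assumes "A \<subseteq> (\<Union>k. U k)" "\<And>k. A \<inter> U k \<in> sets M" "emeasure M A = 1" "(\<Sum>k. m k) < (1::ennreal)"
  shows "\<exists>k. m k < emeasure M (A \<inter> U k)"
proof (rule ccontr)
  assume "\<nexists>k. m k < emeasure M (A \<inter> U k)"
  then have "(\<Sum>k. emeasure M (A \<inter> U k)) \<le> (\<Sum>k. m k)"
    by (intro suminf_le) (auto simp: not_less)
  moreover have "emeasure M A \<le> (\<Sum>k. emeasure M (A \<inter> U k))"
proof -
    have "A = (\<Union>k. A \<inter> U k)" using assms(1) by blast
    moreover have "emeasure M (\<Union>k. A \<inter> U k) \<le> (\<Sum>k. emeasure M (A \<inter> U k))"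
      using assms(2) by (intro emeasure_subadditive_countably) auto
    ultimately show ?thesis by simp
  qed
  ultimately show False using assms(3,4) by simp
qed

lemma exists_maximal_pairwise_subset:
  assumes "finite P" "symp far"
  shows "\<exists>S\<subseteq>P. (\<forall>i\<in>S. \<forall>j\<in>S. i \<noteq> j \<longrightarrow> far i j) \<and> (\<forall>j\<in>P. j \<in> S \<or> (\<exists>i\<in>S. \<not> far i j))"
  using assms(1)
proof (induction P rule: finite_induct)
  case (insert j P)
  then obtain S where S: "S \<subseteq> P" "\<forall>i\<in>S. \<forall>j\<in>S. i \<noteq> j \<longrightarrow> far i j"
    "\<forall>j\<in>P. j \<in> S \<or> (\<exists>i\<in>S. \<not> far i j)" by blast
  show ?case
  proof (cases "\<exists>i\<in>S. \<not> far i j")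
    case True
    then show ?thesis using S by (intro exI[of _ S]) auto
  next
    case False
    then show ?thesis using S assms(2) by (intro exI[of _ "insert j S"]) (auto dest: sympD)
  qed
qed simp

lemma dyadic_band_ex1:
  fixes r :: real
  assumes "0 < r" "r < 1"
  shows "\<exists>!k. (1/2)^Suc k \<le> r \<and> r < 2 * (1/2)^Suc k"
proof -
  obtain n where n: "(1/2::real)^n < r" using real_arch_pow_inv[OF assms(1), of "1/2"] by auto
  define k0 where "k0 = (LEAST n. (1/2::real)^n \<le> r)"
  have k0: "(1/2::real)^k0 \<le> r" unfolding k0_def by (rule LeastI[of _ n]) (use n in simp)
  have "k0 \<noteq> 0" using k0 assms(2) by (intro notI) simp
  then obtain k where k: "k0 = Suc k" using not0_implies_Suc by blast
  have "\<not> (1/2::real)^k \<le> r"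
  proof
    assume "(1/2::real)^k \<le> r"
    then have "k0 \<le> k" unfolding k0_def by (rule Least_le)
    then show False using k by simp
  qed
  then have ex: "(1/2)^Suc k \<le> r \<and> r < 2 * (1/2)^Suc k" using k k0 by simp
  have "k' = k" if "(1/2)^Suc k' \<le> r \<and> r < 2 * (1/2::real)^Suc k'" for k'
  proof (rule ccontr)
    assume "k' \<noteq> k"
    then consider "Suc k \<le> k'" | "Suc k' \<le> k" by linarith
    then show False
    proof cases
      case 1
      then have "(1/2::real)^k' \<le> (1/2)^Suc k" by (intro power_decreasing) auto
      moreover have "2 * (1/2::real)^Suc k' = (1/2)^k'" by simp
      ultimately show False using ex that by linarith
    next
      case 2
      then have "(1/2::real)^k \<le> (1/2)^Suc k'" by (intro power_decreasing) auto
      moreover have "2 * (1/2::real)^Suc k = (1/2)^k" by simp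
      ultimately show False using ex that by linarith
    qed
  qed
  then show ?thesis using ex by blast
qed

lemma emeasure_doubling_power:
  assumes doubling: "\<And>z s. z \<in> F \<Longrightarrow> 0 < s \<Longrightarrow>
      emeasure M (F \<inter> cball_d d z (2 * s)) \<le> ennreal D * emeasure M (F \<inter> cball_d d z s)"
    and "0 \<le> D" "z \<in> F" "0 < r"
  shows "emeasure M (F \<inter> cball_d d z (2^n * r)) \<le> ennreal (D^n) * emeasure M (F \<inter> cball_d d z r)"
proof (induction n)
  case (Suc n)
  have "emeasure M (F \<inter> cball_d d z (2^Suc n * r)) = emeasure M (F \<inter> cball_d d z (2 * (2^n * r)))"
    by (simp add: mult.assoc)
  also have "\<dots> \<le> ennreal D * emeasure M (F \<inter> cball_d d z (2^n * r))"
    using assms by (intro doubling) auto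
  also have "\<dots> \<le> ennreal D * (ennreal (D^n) * emeasure M (F \<inter> cball_d d z r))"
    by (intro mult_left_mono Suc) auto
  also have "\<dots> = ennreal (D^Suc n) * emeasure M (F \<inter> cball_d d z r)"
    using \<open>0 \<le> D\<close> by (simp add: ennreal_mult mult.assoc)
  finally show ?case .
qed simp

lemma measure_Int_UN_separated_cballs:
  assumes met: "Metric_space UNIV d" and "\<And>z. cball_d d z s \<in> sets M"
    and "T \<in> sets M" "emeasure M T \<noteq> \<infinity>" "finite S"
    and sep: "\<And>i j. i \<in> S \<Longrightarrow> j \<in> S \<Longrightarrow> i \<noteq> j \<Longrightarrow> 2 * s < d (y i) (y j)"
  shows "measure M (T \<inter> (\<Union>i\<in>S. cball_d d (y i) s)) = (\<Sum>i\<in>S. measure M (T \<inter> cball_d d (y i) s))"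
proof -
  interpret Metric_space UNIV d by fact
  have "disjoint_family_on (\<lambda>i. T \<inter> cball_d d (y i) s) S"
    unfolding disjoint_family_on_def
  proof (intro ballI impI)
    fix i j assume ij: "i \<in> S" "j \<in> S" "i \<noteq> j"
    have "\<not> (d (y i) z \<le> s \<and> d (y j) z \<le> s)" for z
      using sep[OF ij] triangle'[of "y i" z "y j"] by auto
    then show "T \<inter> cball_d d (y i) s \<inter> (T \<inter> cball_d d (y j) s) = {}"
      unfolding cball_d_def by blast
  qed
  moreover have "emeasure M (T \<inter> cball_d d (y i) s) \<noteq> \<infinity>" for i
    using emeasure_mono[of "T \<inter> cball_d d (y i) s" T M] assms(3,4) neq_top_trans by auto
  ultimately have "measure M (\<Union>i\<in>S. T \<inter> cball_d d (y i) s) = (\<Sum>i\<in>S. measure M (T \<inter> cball_d d (y i) s))"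
    using assms(2,3,5) by (intro measure_finite_Union) auto
  moreover have "T \<inter> (\<Union>i\<in>S. cball_d d (y i) s) = (\<Union>i\<in>S. T \<inter> cball_d d (y i) s)"
    by blast
  ultimately show ?thesis by (simp only:)
qed

lemma cball_d_mono: "a \<le> b \<Longrightarrow> cball_d d x a \<subseteq> cball_d d x b"
  unfolding cball_d_def by auto

lemma cball_d_subset_cball_d:
  assumes "Metric_space UNIV d" "d x y \<le> a"
  shows "cball_d d y b \<subseteq> cball_d d x (a + b)"
proof
  fix z assume "z \<in> cball_d d y b"
  then have "d y z \<le> b" by (simp add: cball_d_def)
  moreover have "d x z \<le> d x y + d y z" by (rule Metric_space.triangle[OF assms(1)]) auto
  ultimately show "z \<in> cball_d d x (a + b)" using assms(2) by (simp add: cball_d_def)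
qed

lemma exists_separated_net:
  assumes met: "Metric_space UNIV d" and "finite P" "0 \<le> t"
  shows "\<exists>S\<subseteq>P. (\<forall>i\<in>S. \<forall>j\<in>S. i \<noteq> j \<longrightarrow> t < d (y i) (y j)) \<and> (\<forall>j\<in>P. \<exists>i\<in>S. d (y i) (y j) \<le> t)"
proof -
  have "symp (\<lambda>i j. t < d (y i) (y j))"
    unfolding symp_def by (simp add: Metric_space.commute[OF met])
  from exists_maximal_pairwise_subset[OF \<open>finite P\<close> this]
  obtain S where S: "S \<subseteq> P" and sep: "\<forall>i\<in>S. \<forall>j\<in>S. i \<noteq> j \<longrightarrow> t < d (y i) (y j)"
    and maximal: "\<forall>j\<in>P. j \<in> S \<or> (\<exists>i\<in>S. \<not> t < d (y i) (y j))"
    by blast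
  have "\<forall>j\<in>P. \<exists>i\<in>S. d (y i) (y j) \<le> t"
  proof
    fix j assume "j \<in> P"
    show "\<exists>i\<in>S. d (y i) (y j) \<le> t"
    proof (cases "j \<in> S")
      case True
      have "d (y j) (y j) = 0" by (rule Metric_space.mdist_zero[OF met]) simp
      then show ?thesis using True \<open>0 \<le> t\<close> by (intro bexI[of _ j]) simp_all
    next
      case False
      then obtain i where "i \<in> S" "\<not> t < d (y i) (y j)" using maximal \<open>j \<in> P\<close> by blast
      then show ?thesis by (intro bexI[of _ i]) simp_all
    qed
  qed
  then show ?thesis using S sep by (intro exI[of _ S]) simp
qed

lemma cball_d_subset_near_centre:
  assumes met: "Metric_space UNIV d" and "d x y \<le> r" "r \<le> \<rho>" "d y' y \<le> 2 * K * \<rho>"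
    and "0 < \<rho>" "1 \<le> K" "4 * K \<le> 2^N"
  shows "cball_d d x r \<subseteq> cball_d d y' (2^N * \<rho>)"
proof -
  have "d y x \<le> r" using assms(2) Metric_space.commute[OF met, of x y] by simp
  then have "cball_d d x r \<subseteq> cball_d d y (r + r)"
    by (rule cball_d_subset_cball_d[OF met])
  also have "\<dots> \<subseteq> cball_d d y' (2 * K * \<rho> + (r + r))"
    using assms(4) by (rule cball_d_subset_cball_d[OF met])
  also have "\<dots> \<subseteq> cball_d d y' (2^N * \<rho>)"
  proof (rule cball_d_mono)
    have "\<rho> \<le> K * \<rho>" using mult_right_mono[of 1 K \<rho>] assms(5,6) by simp
    moreover have "4 * K * \<rho> \<le> 2^N * \<rho>"
      using mult_right_mono[of "4 * K" "2^N" \<rho>] assms(5,7) by simp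
    ultimately show "2 * K * \<rho> + (r + r) \<le> 2^N * \<rho>" using assms(3) by (simp add: algebra_simps)
  qed
  finally show ?thesis .
qed

text \<open>The Vitali step: the \<open>2K\<rho>\<close>-net of centres in \<open>F\<close> covers the family after enlarging radii to
  \<open>4K\<rho> \<le> 2\<^sup>N\<rho>\<close>, and doubling pays for the enlargement with the factor \<open>D\<^sup>N\<close>.\<close>

lemma separated_centres_capture_mass:
  assumes met: "Metric_space UNIV d" and "finite P"
    and Fc: "\<And>z s. F \<inter> cball_d d z s \<in> sets M"
    and doubling: "\<And>z s. z \<in> F \<Longrightarrow> 0 < s \<Longrightarrow>
      emeasure M (F \<inter> cball_d d z (2 * s)) \<le> ennreal D * emeasure M (F \<inter> cball_d d z s)"
    and "0 \<le> D" "0 < \<rho>" "1 \<le> K" "4 * K \<le> 2^N"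
    and r: "\<And>j. j \<in> P \<Longrightarrow> r j \<le> \<rho>"
  shows "\<exists>S y. S \<subseteq> P \<and> (\<forall>i\<in>S. y i \<in> F \<and> d (x i) (y i) \<le> r i)
    \<and> (\<forall>i\<in>S. \<forall>j\<in>S. i \<noteq> j \<longrightarrow> 2 * K * \<rho> < d (y i) (y j))
    \<and> emeasure M (F \<inter> (\<Union>j\<in>P. cball_d d (x j) (r j)))
        \<le> ennreal (D^N) * (\<Sum>i\<in>S. emeasure M (F \<inter> cball_d d (y i) \<rho>))"
proof -
  interpret Metric_space UNIV d by fact
  define P' where "P' = {j\<in>P. F \<inter> cball_d d (x j) (r j) \<noteq> {}}"
  define y where "y j = (SOME z. z \<in> F \<inter> cball_d d (x j) (r j))" for j
  have y: "y j \<in> F \<and> d (x j) (y j) \<le> r j" if "j \<in> P'" for j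
proof -
    have "\<exists>z. z \<in> F \<inter> cball_d d (x j) (r j)" using that unfolding P'_def by blast
    then have "y j \<in> F \<inter> cball_d d (x j) (r j)" unfolding y_def by (rule someI_ex)
    then show ?thesis by (simp add: cball_d_def)
  qed
  have "finite P'" "P' \<subseteq> P" using \<open>finite P\<close> unfolding P'_def by auto
  have "0 \<le> 2 * K * \<rho>" using \<open>0 < \<rho>\<close> \<open>1 \<le> K\<close> by simp
  from exists_separated_net[OF met \<open>finite P'\<close> this, of y]
  obtain S where S: "S \<subseteq> P'" and sep: "\<forall>i\<in>S. \<forall>j\<in>S. i \<noteq> j \<longrightarrow> 2 * K * \<rho> < d (y i) (y j)"
    and net: "\<forall>j\<in>P'. \<exists>i\<in>S. d (y i) (y j) \<le> 2 * K * \<rho>"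
    by blast
  have "finite S" using S \<open>finite P'\<close> finite_subset by blast
  have "cball_d d (x j) (r j) \<subseteq> (\<Union>i\<in>S. cball_d d (y i) (2^N * \<rho>))" if "j \<in> P'" for j
proof -
    obtain i where i: "i \<in> S" "d (y i) (y j) \<le> 2 * K * \<rho>" using net \<open>j \<in> P'\<close> by blast
    have "r j \<le> \<rho>" using r \<open>P' \<subseteq> P\<close> \<open>j \<in> P'\<close> by blast
    with y[OF \<open>j \<in> P'\<close>] i(2) have "cball_d d (x j) (r j) \<subseteq> cball_d d (y i) (2^N * \<rho>)"
      by (intro cball_d_subset_near_centre[OF met _ _ _ \<open>0 < \<rho>\<close> \<open>1 \<le> K\<close> \<open>4 * K \<le> 2^N\<close>]) auto
    then show ?thesis using i(1) by blast
  qed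
  then have "F \<inter> (\<Union>j\<in>P. cball_d d (x j) (r j)) \<subseteq> (\<Union>i\<in>S. F \<inter> cball_d d (y i) (2^N * \<rho>))"
    unfolding P'_def by blast
  then have "emeasure M (F \<inter> (\<Union>j\<in>P. cball_d d (x j) (r j)))
      \<le> emeasure M (\<Union>i\<in>S. F \<inter> cball_d d (y i) (2^N * \<rho>))"
    using Fc \<open>finite S\<close> by (intro emeasure_mono sets.finite_UN) auto
  also have "\<dots> \<le> (\<Sum>i\<in>S. emeasure M (F \<inter> cball_d d (y i) (2^N * \<rho>)))"
    using Fc \<open>finite S\<close> by (intro emeasure_subadditive_finite) auto
  also have "\<dots> \<le> (\<Sum>i\<in>S. ennreal (D^N) * emeasure M (F \<inter> cball_d d (y i) \<rho>))"
    using S y \<open>0 \<le> D\<close> \<open>0 < \<rho>\<close> by (intro sum_mono emeasure_doubling_power[OF doubling]) auto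
  finally have "emeasure M (F \<inter> (\<Union>j\<in>P. cball_d d (x j) (r j)))
      \<le> ennreal (D^N) * (\<Sum>i\<in>S. emeasure M (F \<inter> cball_d d (y i) \<rho>))"
    by (simp add: sum_distrib_left)
  moreover have "\<forall>i\<in>S. y i \<in> F \<and> d (x i) (y i) \<le> r i" using S y by blast
  moreover have "S \<subseteq> P" using S \<open>P' \<subseteq> P\<close> by blast
  ultimately show ?thesis using sep by (intro exI[of _ S] exI[of _ y]) simp
qed

lemma tube_mass_of_separated_centres:
  assumes met: "Metric_space UNIV d" and cb: "\<And>z. cball_d d z \<rho> \<in> sets mu"
    and T: "T \<in> sets mu" "emeasure mu T \<noteq> \<infinity>" and "finite S"
    and sep: "\<And>i j. i \<in> S \<Longrightarrow> j \<in> S \<Longrightarrow> i \<noteq> j \<Longrightarrow> 2 * \<rho> < d (y i) (y j)"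
    and density: "\<And>i. i \<in> S \<Longrightarrow> 0 < measure M (A i) \<Longrightarrow>
      c * measure M (A i) * measure mu T \<le> measure mu (T \<inter> cball_d d (y i) \<rho>)"
  shows "c * measure mu T * (\<Sum>i\<in>S. measure M (A i)) \<le> measure mu (T \<inter> (\<Union>i\<in>S. cball_d d (y i) \<rho>))"
proof -
  have "c * measure mu T * (\<Sum>i\<in>S. measure M (A i)) = (\<Sum>i\<in>S. c * measure M (A i) * measure mu T)"
    by (simp add: sum_distrib_left ac_simps)
  also have "\<dots> \<le> (\<Sum>i\<in>S. measure mu (T \<inter> cball_d d (y i) \<rho>))"
  proof (rule sum_mono)
    fix i assume "i \<in> S"
    show "c * measure M (A i) * measure mu T \<le> measure mu (T \<inter> cball_d d (y i) \<rho>)"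
    proof (cases "0 < measure M (A i)")
      case False
      then have "measure M (A i) = 0" using measure_nonneg[of M "A i"] by linarith
      then show ?thesis by simp
    qed (use density \<open>i \<in> S\<close> in blast)
  qed
  also have "\<dots> = measure mu (T \<inter> (\<Union>i\<in>S. cball_d d (y i) \<rho>))"
    using sep by (intro measure_Int_UN_separated_cballs[symmetric, OF met cb T \<open>finite S\<close>])
  finally show ?thesis .
qed

lemma separated_centres_of_mass:
  fixes x :: "nat \<Rightarrow> 'a" and r :: "nat \<Rightarrow> real"
  assumes met: "Metric_space UNIV d"
    and muF_sets: "sets muF = sets (restrict_space (metric_borel d) F)"
    and muF_mass: "emeasure muF F = 1"
    and doubling: "\<And>z s. z \<in> F \<Longrightarrow> 0 < s \<Longrightarrow>
      emeasure muF (F \<inter> cball_d d z (2 * s)) \<le> ennreal D * emeasure muF (F \<inter> cball_d d z s)"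
    and "1 \<le> D" "0 < \<rho>" "1 \<le> K" "4 * K \<le> 2^N"
    and r: "\<And>i. i \<in> J \<Longrightarrow> r i \<le> \<rho>"
    and "0 \<le> m" and mass: "ennreal m < emeasure muF (F \<inter> (\<Union>i\<in>J. cball_d d (x i) (r i)))"
  shows "\<exists>S y. finite S \<and> S \<subseteq> J \<and> (\<forall>i\<in>S. y i \<in> F \<and> d (x i) (y i) \<le> r i)
    \<and> (\<forall>i\<in>S. \<forall>j\<in>S. i \<noteq> j \<longrightarrow> 2 * K * \<rho> < d (y i) (y j))
    \<and> m / D^N \<le> (\<Sum>i\<in>S. measure muF (F \<inter> cball_d d (y i) \<rho>))"
proof -
  have Fc: "F \<inter> cball_d d z s \<in> sets muF" for z s
    unfolding muF_sets sets_restrict_space using cball_d_in_metric_borel[OF met] by blast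
  interpret muF: finite_measure muF
    using muF_mass sets_eq_imp_space_eq[OF muF_sets] by (intro finite_measureI) (simp add: space_restrict_space)
  have union: "F \<inter> (\<Union>i\<in>P. cball_d d (x i) (r i)) = (\<Union>i\<in>P. F \<inter> cball_d d (x i) (r i))" for P
    by blast
  then have "\<exists>P\<subseteq>J. finite P \<and> ennreal m < emeasure muF (\<Union>i\<in>P. F \<inter> cball_d d (x i) (r i))"
    using Fc mass by (intro exists_finite_subfamily_emeasure_gt) simp_all
  then obtain P where P: "P \<subseteq> J" "finite P" "ennreal m < emeasure muF (F \<inter> (\<Union>i\<in>P. cball_d d (x i) (r i)))"
    unfolding union by blast
  have "\<exists>S y. S \<subseteq> P \<and> (\<forall>i\<in>S. y i \<in> F \<and> d (x i) (y i) \<le> r i)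
    \<and> (\<forall>i\<in>S. \<forall>j\<in>S. i \<noteq> j \<longrightarrow> 2 * K * \<rho> < d (y i) (y j))
    \<and> emeasure muF (F \<inter> (\<Union>i\<in>P. cball_d d (x i) (r i)))
      \<le> ennreal (D^N) * (\<Sum>i\<in>S. emeasure muF (F \<inter> cball_d d (y i) \<rho>))"
    using assms(5-8) r P(1) by (intro separated_centres_capture_mass[OF met \<open>finite P\<close> Fc doubling]) auto
  then obtain S y where S: "S \<subseteq> P" "\<forall>i\<in>S. y i \<in> F \<and> d (x i) (y i) \<le> r i"
    and sep: "\<forall>i\<in>S. \<forall>j\<in>S. i \<noteq> j \<longrightarrow> 2 * K * \<rho> < d (y i) (y j)"
    and capture: "emeasure muF (F \<inter> (\<Union>i\<in>P. cball_d d (x i) (r i)))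
      \<le> ennreal (D^N) * (\<Sum>i\<in>S. emeasure muF (F \<inter> cball_d d (y i) \<rho>))"
    by blast
  note P(3)
  also note capture
  also have "ennreal (D^N) * (\<Sum>i\<in>S. emeasure muF (F \<inter> cball_d d (y i) \<rho>))
      = ennreal (D^N * (\<Sum>i\<in>S. measure muF (F \<inter> cball_d d (y i) \<rho>)))"
    using \<open>1 \<le> D\<close> by (simp add: muF.emeasure_eq_measure ennreal_mult' sum_ennreal)
  finally have "m < D^N * (\<Sum>i\<in>S. measure muF (F \<inter> cball_d d (y i) \<rho>))"
    using \<open>0 \<le> m\<close> ennreal_less_iff by blast
  then have "m / D^N \<le> (\<Sum>i\<in>S. measure muF (F \<inter> cball_d d (y i) \<rho>))"
    using \<open>1 \<le> D\<close> by (simp add: pos_divide_le_eq mult.commute)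
  moreover have "finite S" "S \<subseteq> J" using S(1) P(1,2) finite_subset by blast+
  ultimately show ?thesis using S(2) sep by (intro exI[of _ S] exI[of _ y]) simp
qed

lemma tube_mass_near_ball_family:
  fixes x :: "nat \<Rightarrow> 'a" and r :: "nat \<Rightarrow> real"
  assumes met: "Metric_space UNIV d" and cb: "\<And>z s. cball_d d z s \<in> sets mu"
    and T: "T \<in> sets mu" "emeasure mu T \<noteq> \<infinity>"
    and muF_sets: "sets muF = sets (restrict_space (metric_borel d) F)"
    and muF_mass: "emeasure muF F = 1"
    and doubling: "\<And>z s. z \<in> F \<Longrightarrow> 0 < s \<Longrightarrow>
      emeasure muF (F \<inter> cball_d d z (2 * s)) \<le> ennreal D * emeasure muF (F \<inter> cball_d d z s)"
    and "1 \<le> D" "0 < \<delta>" "1 \<le> K" "0 \<le> K'" "4 * K \<le> 2^N"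
    and density: "\<And>z. z \<in> F \<Longrightarrow> 0 < measure muF (F \<inter> cball_d d z (2 * \<delta>)) \<Longrightarrow>
      K' * measure muF (F \<inter> cball_d d z (2 * \<delta>)) * \<delta> powr \<theta> * measure mu T
        \<le> measure mu (T \<inter> cball_d d z (K * (2 * \<delta>)))"
    and band: "\<And>i. i \<in> J \<Longrightarrow> \<delta> \<le> r i \<and> r i \<le> 2 * \<delta>"
    and "0 \<le> m" and mass: "ennreal m < emeasure muF (F \<inter> (\<Union>i\<in>J. cball_d d (x i) (r i)))"
  shows "\<exists>G\<in>sets mu. G \<subseteq> (\<Union>i\<in>J. cball_d d (x i) ((2 * K + 1) * r i))
    \<and> K' * \<delta> powr \<theta> * m / D^N * measure mu T \<le> measure mu (T \<inter> G)"
proof -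
  have "\<exists>S y. finite S \<and> S \<subseteq> J \<and> (\<forall>i\<in>S. y i \<in> F \<and> d (x i) (y i) \<le> r i)
    \<and> (\<forall>i\<in>S. \<forall>j\<in>S. i \<noteq> j \<longrightarrow> 2 * K * (2 * \<delta>) < d (y i) (y j))
    \<and> m / D^N \<le> (\<Sum>i\<in>S. measure muF (F \<inter> cball_d d (y i) (2 * \<delta>)))"
    using assms(8-10,12) band \<open>0 \<le> m\<close> mass
    by (intro separated_centres_of_mass[OF met muF_sets muF_mass doubling]) auto
  then obtain S y where S: "finite S" "S \<subseteq> J" "\<forall>i\<in>S. y i \<in> F \<and> d (x i) (y i) \<le> r i"
    and sep: "\<forall>i\<in>S. \<forall>j\<in>S. i \<noteq> j \<longrightarrow> 2 * K * (2 * \<delta>) < d (y i) (y j)"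
    and m_le: "m / D^N \<le> (\<Sum>i\<in>S. measure muF (F \<inter> cball_d d (y i) (2 * \<delta>)))"
    by blast
  define G where "G = (\<Union>i\<in>S. cball_d d (y i) (K * (2 * \<delta>)))"
  have "K' * \<delta> powr \<theta> * m / D^N * measure mu T
      \<le> K' * \<delta> powr \<theta> * measure mu T * (\<Sum>i\<in>S. measure muF (F \<inter> cball_d d (y i) (2 * \<delta>)))"
    using mult_left_mono[OF m_le, of "K' * \<delta> powr \<theta> * measure mu T"] \<open>0 \<le> K'\<close>
    by (simp add: ac_simps)
  also have "\<dots> \<le> measure mu (T \<inter> G)"
    unfolding G_def
  proof (rule tube_mass_of_separated_centres[OF met cb T \<open>finite S\<close>])
    show "2 * (K * (2 * \<delta>)) < d (y i) (y j)" if "i \<in> S" "j \<in> S" "i \<noteq> j" for i j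
      using sep that by (simp add: ac_simps)
    show "K' * \<delta> powr \<theta> * measure muF (F \<inter> cball_d d (y i) (2 * \<delta>)) * measure mu T
        \<le> measure mu (T \<inter> cball_d d (y i) (K * (2 * \<delta>)))"
      if "i \<in> S" "0 < measure muF (F \<inter> cball_d d (y i) (2 * \<delta>))" for i
      using density[of "y i"] S(3) that by (simp add: ac_simps)
  qed
  finally have "K' * \<delta> powr \<theta> * m / D^N * measure mu T \<le> measure mu (T \<inter> G)" .
  moreover have "cball_d d (y i) (K * (2 * \<delta>)) \<subseteq> cball_d d (x i) ((2 * K + 1) * r i)" if "i \<in> S" for i
proof -
    have "cball_d d (y i) (K * (2 * \<delta>)) \<subseteq> cball_d d (x i) (r i + K * (2 * \<delta>))"
      using S(3) that by (intro cball_d_subset_cball_d[OF met]) auto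
    also have "\<dots> \<subseteq> cball_d d (x i) ((2 * K + 1) * r i)"
    proof (rule cball_d_mono)
      have "K * \<delta> \<le> K * r i" using band[of i] S(2) that \<open>1 \<le> K\<close> by (intro mult_left_mono) auto
      then show "r i + K * (2 * \<delta>) \<le> (2 * K + 1) * r i" by (simp add: algebra_simps)
    qed
    finally show ?thesis .
  qed
  then have "G \<subseteq> (\<Union>i\<in>J. cball_d d (x i) ((2 * K + 1) * r i))"
    unfolding G_def using S(2) by (meson UN_mono)
  moreover have "G \<in> sets mu" unfolding G_def using cb \<open>finite S\<close> by auto
  ultimately show ?thesis by blast
qed

lemma kakeya_maximal_ge_Int_density:
  assumes "a \<in> Par" "tube d I \<delta> u a \<in> sets mu" "emeasure mu (tube d I \<delta> u a) \<noteq> \<infinity>"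
    and "G \<in> sets mu" "G \<subseteq> E"
  shows "ennreal (measure mu (tube d I \<delta> u a \<inter> G) / measure mu (tube d I \<delta> u a))
    \<le> kakeya_maximal mu d Par I (indicator E) \<delta> u"
proof -
  define T where "T = tube d I \<delta> u a"
  have "T \<inter> G \<in> sets mu" using assms(2,4) unfolding T_def by blast
  have "emeasure mu (T \<inter> G) \<le> emeasure mu T" using assms(2) unfolding T_def by (intro emeasure_mono) auto
  then have "emeasure mu (T \<inter> G) \<noteq> \<infinity>" using assms(3) neq_top_trans unfolding T_def by auto
  then have "ennreal (measure mu (T \<inter> G)) = emeasure mu (T \<inter> G)"
    by (metis emeasure_eq_ennreal_measure infinity_ennreal_def)
  also have "\<dots> = (\<integral>\<^sup>+ x. indicator (T \<inter> G) x \<partial>completion mu)"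
    using \<open>T \<inter> G \<in> sets mu\<close> by (simp add: main_part)
  also have "\<dots> \<le> (\<integral>\<^sup>+ x. ennreal \<bar>indicator E x :: real\<bar> * indicator T x \<partial>completion mu)"
    using assms(5) by (intro nn_integral_mono) (auto simp: indicator_def)
  finally have "ennreal (1 / measure mu T) * ennreal (measure mu (T \<inter> G))
      \<le> ennreal (1 / measure mu T) * (\<integral>\<^sup>+ x. ennreal \<bar>indicator E x :: real\<bar> * indicator T x \<partial>completion mu)"
    by (rule mult_left_mono) simp
  also have "\<dots> \<le> kakeya_maximal mu d Par I (indicator E) \<delta> u"
    unfolding kakeya_maximal_def T_def using assms(1) by (rule SUP_upper2) simp
  finally show ?thesis unfolding T_def by (simp add: ennreal_mult[symmetric])
qed

lemma kakeya_maximal_gt_of_tube_mass: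
  assumes "a \<in> Par" "tube d I \<delta> u a \<in> sets mu" "emeasure mu (tube d I \<delta> u a) \<noteq> \<infinity>"
    and "0 < measure mu (tube d I \<delta> u a)" "G \<in> sets mu" "G \<subseteq> E"
    and mass: "c * measure mu (tube d I \<delta> u a) \<le> measure mu (tube d I \<delta> u a \<inter> G)"
    and "0 \<le> t" "t < c"
  shows "ennreal t < kakeya_maximal mu d Par I (indicator E) \<delta> u"
proof -
  have "c \<le> measure mu (tube d I \<delta> u a \<inter> G) / measure mu (tube d I \<delta> u a)"
    using mass assms(4) by (simp add: pos_le_divide_eq)
  then have "t < measure mu (tube d I \<delta> u a \<inter> G) / measure mu (tube d I \<delta> u a)"
    using \<open>t < c\<close> by linarith
  then have "ennreal t < ennreal (measure mu (tube d I \<delta> u a \<inter> G) / measure mu (tube d I \<delta> u a))"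
    using \<open>0 \<le> t\<close> by (simp add: ennreal_lessI)
  also have "\<dots> \<le> kakeya_maximal mu d Par I (indicator E) \<delta> u"
    using assms(1-3,5,6) by (rule kakeya_maximal_ge_Int_density)
  finally show ?thesis .
qed

lemma dyadic_weight_bound:
  fixes \<delta> r \<theta> \<beta> \<gamma> p Q s \<kappa> :: real
  assumes "0 < \<delta>" "\<delta> \<le> r" "r \<le> 2 * \<delta>" "0 \<le> \<theta>" "0 \<le> \<beta>" "0 < p" "0 \<le> \<gamma>" "0 < \<kappa>"
    and Q: "Q = s + (\<theta> + \<beta>) * p + \<gamma> * p"
  shows "(\<kappa> * (\<delta> powr \<theta> * (2 * \<delta>) powr \<gamma>)) powr (- p) * \<delta> powr (- \<beta> * p) * r powr Q
    \<le> \<kappa> powr (- p) * 2 powr ((\<theta> + \<beta>) * p) * r powr s"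
proof -
  define a where "a = (\<theta> + \<beta>) * p"
  define g where "g = \<gamma> * p"
  have "0 \<le> a" "0 \<le> g" "0 < r" using assms unfolding a_def g_def by auto
  have "(\<kappa> * (\<delta> powr \<theta> * (2 * \<delta>) powr \<gamma>)) powr (- p) * \<delta> powr (- \<beta> * p) * r powr Q
      = \<kappa> powr (- p) * (\<delta> powr (- a) * (2 * \<delta>) powr (- g) * r powr s) * (r powr a * r powr g)"
proof -
    have "(\<kappa> * (\<delta> powr \<theta> * (2 * \<delta>) powr \<gamma>)) powr (- p)
        = \<kappa> powr (- p) * \<delta> powr (- \<theta> * p) * (2 * \<delta>) powr (- g)"
      using assms unfolding g_def by (simp add: powr_mult powr_powr)
    moreover have "r powr Q = r powr s * r powr a * r powr g"
      unfolding Q a_def g_def by (simp add: powr_add)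
    moreover have "\<delta> powr (- \<theta> * p) * \<delta> powr (- \<beta> * p) = \<delta> powr (- a)"
      unfolding a_def by (simp add: powr_add[symmetric] algebra_simps)
    ultimately show ?thesis by (simp add: ac_simps)
  qed
  also have "\<dots> \<le> \<kappa> powr (- p) * (\<delta> powr (- a) * (2 * \<delta>) powr (- g) * r powr s)
      * ((2 * \<delta>) powr a * (2 * \<delta>) powr g)"
    using assms \<open>0 \<le> a\<close> \<open>0 \<le> g\<close> \<open>0 < r\<close> by (intro mult_left_mono mult_mono powr_mono2) auto
  also have "\<dots> = \<kappa> powr (- p) * 2 powr a * r powr s
      * (\<delta> powr (- a) * \<delta> powr a) * ((2 * \<delta>) powr (- g) * (2 * \<delta>) powr g)"
    using assms by (simp add: powr_mult ac_simps)
  also have "\<dots> = \<kappa> powr (- p) * 2 powr a * r powr s"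
    using assms by (simp add: powr_add[symmetric])
  finally show ?thesis unfolding a_def .
qed

lemma suminf_dyadic_weights:
  fixes \<gamma> :: real
  assumes "0 < \<gamma>"
  shows "(\<Sum>k. ennreal ((1 - (1/2) powr \<gamma>) / 2 * (2 * (1/2)^Suc k) powr \<gamma>)) = ennreal (1/2)"
proof -
  define q :: real where "q = (1/2) powr \<gamma>"
  have q: "0 < q" "q < 1" unfolding q_def using assms by (auto simp: powr01_less_one)
  have "(2 * (1/2::real)^Suc k) powr \<gamma> = q^k" for k
proof -
    have "(2 * (1/2::real)^Suc k) powr \<gamma> = ((1/2) powr real k) powr \<gamma>" by (simp add: powr_realpow)
    then show ?thesis unfolding q_def by (simp add: powr_powr powr_power mult.commute)
  qed
  moreover have "(\<lambda>k. (1 - q) / 2 * q^k) sums ((1 - q) / 2 * (1 / (1 - q)))"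
    using q by (intro sums_mult geometric_sums) simp
  moreover have "(1 - q) / 2 * (1 / (1 - q)) = 1/2" using q by simp
  ultimately have "(\<lambda>k. (1 - q) / 2 * (2 * (1/2::real)^Suc k) powr \<gamma>) sums (1/2)"
    by (simp only:)
  then show ?thesis
    using q unfolding q_def by (subst suminf_ennreal_eq) auto
qed

lemma measurable_of_emeasure_bounds:
  assumes "0 < a" "ennreal a \<le> emeasure M A" "emeasure M A \<le> ennreal b"
  shows "A \<in> sets M \<and> 0 < measure M A \<and> emeasure M A \<noteq> \<infinity>"
proof -
  have "0 < emeasure M A" using assms(1,2) by (metis ennreal_less_zero_iff order_less_le_trans)
  moreover have "emeasure M A \<noteq> \<infinity>"
    using assms(3) neq_top_trans[of "ennreal b" "emeasure M A"] by simp
  ultimately show ?thesis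
    by (auto simp: emeasure_notin_sets measure_def enn2real_positive_iff less_top intro: ccontr)
qed

lemma cball_d_ediam_subset:
  assumes "Metric_space UNIV d" "x \<in> C" "ediam d C \<noteq> \<infinity>"
  shows "C \<subseteq> cball_d d x (enn2real (ediam d C))"
proof
  fix z assume "z \<in> C"
  have "ennreal (d x z) \<le> ediam d C"
    unfolding ediam_def using assms(2) \<open>z \<in> C\<close> by (intro SUP_upper2[of x] SUP_upper2[of z]) auto
  then have "d x z \<le> enn2real (ediam d C)"
    using assms(3) Metric_space.nonneg[OF assms(1)]
    by (metis enn2real_ennreal enn2real_mono infinity_ennreal_def less_top)
  then show "z \<in> cball_d d x (enn2real (ediam d C))" unfolding cball_d_def by simp
qed

lemma hausdorff_null_imp_cball_cover:
  assumes met: "Metric_space UNIV d" and null: "hausdorff_measure d s B = 0"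
    and "0 < \<epsilon>\<^sub>0" "0 < \<epsilon>"
  shows "\<exists>x D. (\<forall>i. 0 \<le> D i \<and> D i \<le> \<epsilon>\<^sub>0) \<and> B \<subseteq> (\<Union>i::nat. cball_d d (x i) (D i))
    \<and> (\<Sum>i. ennreal (D i powr s)) \<le> ennreal \<epsilon>"
proof -
  have "hausdorff_pre d s \<epsilon>\<^sub>0 B \<le> hausdorff_measure d s B"
    unfolding hausdorff_measure_def using \<open>0 < \<epsilon>\<^sub>0\<close> by (intro SUP_upper) auto
  then have "hausdorff_pre d s \<epsilon>\<^sub>0 B < ennreal \<epsilon>" using null \<open>0 < \<epsilon>\<close> by simp
  then obtain C where cover: "B \<subseteq> (\<Union>i. C i)" and diam: "\<And>i. ediam d (C i) \<le> ennreal \<epsilon>\<^sub>0"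
    and sum: "(\<Sum>i. (if C i = {} then 0 else ennreal ((enn2real (ediam d (C i))) powr s))) < ennreal \<epsilon>"
    unfolding hausdorff_pre_def by (auto simp: INF_less_iff)
  define D where "D i = enn2real (ediam d (C i))" for i
  have D: "0 \<le> D i \<and> D i \<le> \<epsilon>\<^sub>0" for i
    unfolding D_def using diam[of i] \<open>0 < \<epsilon>\<^sub>0\<close> by (auto intro: enn2real_leI)
  have "(if C i = {} then 0 else ennreal ((enn2real (ediam d (C i))) powr s)) = ennreal (D i powr s)" for i
    by (simp add: D_def ediam_def bot_ennreal)
  then have "(\<Sum>i. ennreal (D i powr s)) \<le> ennreal \<epsilon>" using sum by simp
  moreover define x where "x i = (SOME z. z \<in> C i)" for i
  have "C i \<subseteq> cball_d d (x i) (D i)" for i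
  proof (cases "C i = {}")
    case False
    then show ?thesis
      unfolding x_def D_def using diam[of i] some_in_eq[of "C i"]
      by (intro cball_d_ediam_subset[OF met]) (auto simp: top_unique)
  qed simp
  then have "(\<Union>i. C i) \<subseteq> (\<Union>i. cball_d d (x i) (D i))" by (simp add: UN_mono)
  then have "B \<subseteq> (\<Union>i. cball_d d (x i) (D i))" using cover by (rule order_trans[rotated])
  ultimately show ?thesis using D by (intro exI[of _ x] exI[of _ D]) simp
qed

lemma hausdorff_null_cball_cover:
  assumes met: "Metric_space UNIV d" and null: "hausdorff_measure d s B = 0"
    and "0 < s" "0 < \<epsilon>\<^sub>0" "0 < \<epsilon>"
  shows "\<exists>x r. (\<forall>i. 0 < r i \<and> r i \<le> \<epsilon>\<^sub>0) \<and> B \<subseteq> (\<Union>i::nat. cball_d d (x i) (r i))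
    \<and> (\<Sum>i. ennreal (r i powr s)) \<le> ennreal \<epsilon>"
proof -
  have "\<exists>x D. (\<forall>i. 0 \<le> D i \<and> D i \<le> \<epsilon>\<^sub>0) \<and> B \<subseteq> (\<Union>i::nat. cball_d d (x i) (D i))
    \<and> (\<Sum>i. ennreal (D i powr s)) \<le> ennreal (\<epsilon> / 2)"
    using \<open>0 < \<epsilon>\<close> by (intro hausdorff_null_imp_cball_cover[OF met null \<open>0 < \<epsilon>\<^sub>0\<close>]) simp
  then obtain x D where D: "\<And>i. 0 \<le> D i \<and> D i \<le> \<epsilon>\<^sub>0" and cover: "B \<subseteq> (\<Union>i. cball_d d (x i) (D i))"
    and sum_D: "(\<Sum>i. ennreal (D i powr s)) \<le> ennreal (\<epsilon> / 2)"
    by blast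
  define t where "t i = (\<epsilon> / 2 * (1/2)^Suc i) powr (1 / s)" for i
  define r where "r i = max (D i) (min \<epsilon>\<^sub>0 (t i))" for i
  have t: "0 < t i" for i unfolding t_def using \<open>0 < \<epsilon>\<close> by simp
  have r: "0 < r i \<and> r i \<le> \<epsilon>\<^sub>0" for i
    unfolding r_def using D[of i] t[of i] \<open>0 < \<epsilon>\<^sub>0\<close> by auto
  have "r i powr s \<le> D i powr s + \<epsilon> / 2 * (1/2)^Suc i" for i
  proof (cases "D i \<le> min \<epsilon>\<^sub>0 (t i)")
    case True
    have "r i powr s \<le> t i powr s"
      unfolding r_def using True D[of i] \<open>0 < s\<close> by (intro powr_mono2) auto
    also have "\<dots> = \<epsilon> / 2 * (1/2)^Suc i" unfolding t_def using \<open>0 < s\<close> \<open>0 < \<epsilon>\<close> by (simp add: powr_powr)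
    finally show ?thesis using powr_ge_zero[of "D i" s] by linarith
  next
    case False
    then have "r i = D i" unfolding r_def using D[of i] by auto
    then show ?thesis using \<open>0 < \<epsilon>\<close> by simp
  qed
  then have "(\<Sum>i. ennreal (r i powr s)) \<le> (\<Sum>i. ennreal (D i powr s) + ennreal (\<epsilon> / 2 * (1/2)^Suc i))"
    using \<open>0 < \<epsilon>\<close> by (intro suminf_le) (auto simp flip: ennreal_plus)
  also have "\<dots> = (\<Sum>i. ennreal (D i powr s)) + (\<Sum>i. ennreal (\<epsilon> / 2 * (1/2)^Suc i))"
    by (rule suminf_add[symmetric]) auto
  also have "(\<Sum>i. ennreal (\<epsilon> / 2 * (1/2)^Suc i)) = ennreal (\<epsilon> / 2)"
    using \<open>0 < \<epsilon>\<close> sums_mult[OF power_half_series, of "\<epsilon> / 2"] by (subst suminf_ennreal_eq) auto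
  also have "(\<Sum>i. ennreal (D i powr s)) + ennreal (\<epsilon> / 2) \<le> ennreal (\<epsilon> / 2) + ennreal (\<epsilon> / 2)"
    using sum_D by (rule add_right_mono)
  also have "\<dots> = ennreal \<epsilon>" using \<open>0 < \<epsilon>\<close> by (simp flip: ennreal_plus)
  finally have "(\<Sum>i. ennreal (r i powr s)) \<le> ennreal \<epsilon>" .
  moreover have "cball_d d (x i) (D i) \<subseteq> cball_d d (x i) (r i)" for i
    unfolding r_def by (rule cball_d_mono) simp
  then have "(\<Union>i. cball_d d (x i) (D i)) \<subseteq> (\<Union>i. cball_d d (x i) (r i))" by (simp add: UN_mono)
  then have "B \<subseteq> (\<Union>i. cball_d d (x i) (r i))" using cover by (rule order_trans[rotated])
  ultimately show ?thesis using r by (intro exI[of _ x] exI[of _ r]) simp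
qed

text \<open>The hypotheses of the theorem that the lower bound actually uses.\<close>

locale kakeya_maximal_setting =
  fixes d :: "'a \<Rightarrow> 'a \<Rightarrow> real" and mu :: "'a measure"
    and Y :: "'z set" and nu :: "'z measure" and Par :: "'p set"
    and F I :: "'z \<Rightarrow> 'p \<Rightarrow> 'a set" and muF :: "'z \<Rightarrow> 'p \<Rightarrow> 'a measure"
    and Q C0 Cdb theta K' K p beta Cpb :: real
  assumes d_metric: "Metric_space UNIV d"
    and mu_borel: "sets mu = sets (metric_borel d)"
    and mu_upper: "\<And>x r. 0 < r \<Longrightarrow> ennreal r < ediam d UNIV \<Longrightarrow>
      emeasure mu (cball_d d x r) \<le> ennreal (C0 * r powr Q)"
    and C0_pos: "0 < C0"
    and Y_sets: "Y \<in> sets nu" and nu_Y: "0 < emeasure nu Y" "emeasure nu Y \<noteq> \<infinity>"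
    and muF_sets: "\<And>u a. u \<in> Y \<Longrightarrow> a \<in> Par \<Longrightarrow>
      sets (muF u a) = sets (restrict_space (metric_borel d) (F u a))"
    and muF_mass: "\<And>u a. u \<in> Y \<Longrightarrow> a \<in> Par \<Longrightarrow> emeasure (muF u a) (F u a) = 1"
    and muF_doubling: "\<And>u a x r. u \<in> Y \<Longrightarrow> a \<in> Par \<Longrightarrow> x \<in> F u a \<Longrightarrow> 0 < r \<Longrightarrow>
      emeasure (muF u a) (F u a \<inter> cball_d d x (2 * r))
        \<le> ennreal Cdb * emeasure (muF u a) (F u a \<inter> cball_d d x r)"
    and tube_measure: "\<And>u a \<delta>. u \<in> Y \<Longrightarrow> a \<in> Par \<Longrightarrow> 0 < \<delta> \<Longrightarrow> \<delta> < 1 \<Longrightarrow>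
      tube d I \<delta> u a \<in> sets mu \<and> 0 < measure mu (tube d I \<delta> u a) \<and> emeasure mu (tube d I \<delta> u a) \<noteq> \<infinity>"
    and theta_nonneg: "0 \<le> theta" and K'_pos: "0 < K'" and K_ge_1: "1 \<le> K"
    and A2: "\<And>u a x \<delta> r. u \<in> Y \<Longrightarrow> a \<in> Par \<Longrightarrow> x \<in> F u a \<Longrightarrow>
      0 < \<delta> \<Longrightarrow> \<delta> < 1 \<Longrightarrow> \<delta> \<le> r \<Longrightarrow> r \<le> 2 * \<delta> \<Longrightarrow>
      measure (muF u a) (F u a \<inter> cball_d d x r) > 0 \<Longrightarrow>
      measure mu (tube d I \<delta> u a \<inter> cball_d d x (K * r))
        \<ge> K' * measure (muF u a) (F u a \<inter> cball_d d x r) * \<delta> powr theta * measure mu (tube d I \<delta> u a)"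
    and p_pos: "0 < p" and beta_nonneg: "0 \<le> beta" and Cpb_nonneg: "0 \<le> Cpb"
    and maximal_est: "\<And>E lam \<delta>. E \<in> sets (completion mu) \<Longrightarrow> 0 < lam \<Longrightarrow> 0 < \<delta> \<Longrightarrow> \<delta> < 1 \<Longrightarrow>
      outer_measure_of nu {u \<in> Y. kakeya_maximal mu d Par I (indicator E) \<delta> u > ennreal lam}
        \<le> ennreal (Cpb * lam powr (- p) * \<delta> powr (- beta * p)) * emeasure (completion mu) E"
begin

lemma cball_d_sets: "cball_d d x r \<in> sets mu"
  unfolding mu_borel by (rule cball_d_in_metric_borel[OF d_metric])

text \<open>The bound \<open>\<mu>(B(x, r)) \<le> C\<^sub>0 r\<^sup>Q\<close> is only assumed for \<open>r < diam X\<close>; a null Kakeya set misses a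
  point of \<open>X\<close>, so that range of radii is not empty.\<close>

lemma kakeya_ex_ediam_lower_bound:
  assumes "generalized_kakeya mu Y Par F B"
  shows "\<exists>L>0. ennreal L \<le> ediam d UNIV"
proof -
  have B: "emeasure (completion mu) B = 0" "B \<in> sets (completion mu)" "\<forall>u\<in>Y. \<exists>a\<in>Par. F u a \<subseteq> B"
    using assms unfolding generalized_kakeya_def by auto
  obtain u where "u \<in> Y" using nu_Y(1) by fastforce
  then obtain a where a: "a \<in> Par" "F u a \<subseteq> B" using B(3) by blast
  then obtain x where "x \<in> B" using muF_mass[OF \<open>u \<in> Y\<close> a(1)] by fastforce
  have tube: "tube d I (1/2) u a \<in> sets mu" "0 < measure mu (tube d I (1/2) u a)"
    using tube_measure[OF \<open>u \<in> Y\<close> a(1), of "1/2"] by auto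
  have "\<not> tube d I (1/2) u a \<subseteq> B"
  proof
    assume "tube d I (1/2) u a \<subseteq> B"
    then have "emeasure (completion mu) (tube d I (1/2) u a) \<le> emeasure (completion mu) B"
      using B(2) by (rule emeasure_mono)
    moreover have "emeasure (completion mu) (tube d I (1/2) u a) = emeasure mu (tube d I (1/2) u a)"
      using tube(1) by simp
    ultimately have "emeasure mu (tube d I (1/2) u a) \<le> emeasure (completion mu) B" by simp
    then show False using tube(2) B(1) by (simp add: measure_def)
  qed
  then obtain y where "y \<notin> B" by blast
  then have "x \<noteq> y" using \<open>x \<in> B\<close> by blast
  then have "0 < d x y" by (rule Metric_space.mdist_pos_less[OF d_metric]) auto
  moreover have "ennreal (d x y) \<le> ediam d UNIV"
    unfolding ediam_def by (intro SUP_upper2[of x] SUP_upper2[of y]) auto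
  ultimately show ?thesis by blast
qed

lemma emeasure_UN_cball_le:
  fixes x :: "nat \<Rightarrow> 'a"
  assumes "\<And>i. i \<in> J \<Longrightarrow> 0 < \<rho> i \<and> ennreal (\<rho> i) < ediam d UNIV"
  shows "emeasure mu (\<Union>i\<in>J. cball_d d (x i) (\<rho> i))
    \<le> (\<Sum>i. if i \<in> J then ennreal (C0 * \<rho> i powr Q) else 0)"
proof -
  have "(\<Union>i\<in>J. cball_d d (x i) (\<rho> i)) = (\<Union>i. if i \<in> J then cball_d d (x i) (\<rho> i) else {})"
    by auto
  also have "emeasure mu \<dots> \<le> (\<Sum>i. emeasure mu (if i \<in> J then cball_d d (x i) (\<rho> i) else {}))"
    by (intro emeasure_subadditive_countably) (auto simp: cball_d_sets)
  also have "\<dots> \<le> (\<Sum>i. if i \<in> J then ennreal (C0 * \<rho> i powr Q) else 0)"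
    using assms mu_upper by (intro suminf_le) auto
  finally show ?thesis .
qed

lemma emeasure_Y_le_superlevel_sum:
  assumes cover: "Y \<subseteq> (\<Union>k. {u \<in> Y. ennreal (lam k) < kakeya_maximal mu d Par I (indicator (E k)) (\<delta> k) u})"
    and "\<And>k. E k \<in> sets mu" "\<And>k. 0 < lam k" "\<And>k. 0 < \<delta> k \<and> \<delta> k < 1"
  shows "emeasure nu Y \<le> (\<Sum>k. ennreal (Cpb * lam k powr (- p) * \<delta> k powr (- beta * p)) * emeasure mu (E k))"
proof -
  have "emeasure nu Y = outer_measure_of nu Y" using Y_sets by simp
  also have "\<dots> \<le> outer_measure_of nu (\<Union>k. {u \<in> Y. ennreal (lam k) < kakeya_maximal mu d Par I (indicator (E k)) (\<delta> k) u})"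
    using cover by (rule outer_measure_of_mono)
  also have "\<dots> \<le> (\<Sum>k. outer_measure_of nu {u \<in> Y. ennreal (lam k) < kakeya_maximal mu d Par I (indicator (E k)) (\<delta> k) u})"
    using sets.sets_into_space[OF Y_sets] by (intro outer_measure_of_countable_subadditive) blast
  also have "\<dots> \<le> (\<Sum>k. ennreal (Cpb * lam k powr (- p) * \<delta> k powr (- beta * p)) * emeasure mu (E k))"
  proof (intro suminf_le)
    fix k
    show "outer_measure_of nu {u \<in> Y. ennreal (lam k) < kakeya_maximal mu d Par I (indicator (E k)) (\<delta> k) u}
        \<le> ennreal (Cpb * lam k powr (- p) * \<delta> k powr (- beta * p)) * emeasure mu (E k)"
      using maximal_est[of "E k" "lam k" "\<delta> k"] assms(2-4) by simp
  qed auto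
  finally show ?thesis .
qed


lemma superlevel_sets_cover:
  fixes x :: "nat \<Rightarrow> 'a" and r :: "nat \<Rightarrow> real" and J :: "nat \<Rightarrow> nat set" and \<delta> m :: "nat \<Rightarrow> real"
  assumes kakeya: "generalized_kakeya mu Y Par F B"
    and cover: "B \<subseteq> (\<Union>i. cball_d d (x i) (r i))"
    and J: "\<And>i. \<exists>k. i \<in> J k" and band: "\<And>k i. i \<in> J k \<Longrightarrow> \<delta> k \<le> r i \<and> r i \<le> 2 * \<delta> k"
    and \<delta>: "\<And>k. 0 < \<delta> k \<and> \<delta> k < 1"
    and m: "\<And>k. 0 < m k" "(\<Sum>k. ennreal (m k)) < 1"
    and D: "Cdb \<le> D" "1 \<le> D" "4 * K \<le> 2^N"
  shows "Y \<subseteq> (\<Union>k. {u \<in> Y. ennreal (K' * \<delta> k powr theta * m k / (2 * D^N))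
    < kakeya_maximal mu d Par I (indicator (\<Union>i\<in>J k. cball_d d (x i) ((2 * K + 1) * r i))) (\<delta> k) u})"
proof
  fix u assume "u \<in> Y"
  then obtain a where a: "a \<in> Par" "F u a \<subseteq> B"
    using kakeya unfolding generalized_kakeya_def by blast
  define U where "U k = (\<Union>i\<in>J k. cball_d d (x i) (r i))" for k
  have "F u a \<subseteq> (\<Union>k. U k)"
  proof
    fix z assume "z \<in> F u a"
    then obtain i where i: "z \<in> cball_d d (x i) (r i)" using a(2) cover by blast
    obtain k where "i \<in> J k" using J by blast
    then show "z \<in> (\<Union>k. U k)" using i unfolding U_def by blast
  qed
  moreover have "F u a \<inter> U k \<in> sets (muF u a)" for k
    unfolding muF_sets[OF \<open>u \<in> Y\<close> a(1)] sets_restrict_space U_def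
    using cball_d_in_metric_borel[OF d_metric] by blast
  ultimately obtain k where k: "ennreal (m k) < emeasure (muF u a) (F u a \<inter> U k)"
    using exists_emeasure_Int_gt_of_suminf_less muF_mass[OF \<open>u \<in> Y\<close> a(1)] m(2) by blast
  define T where "T = tube d I (\<delta> k) u a"
  have T: "T \<in> sets mu" "0 < measure mu T" "emeasure mu T \<noteq> \<infinity>"
    using tube_measure[OF \<open>u \<in> Y\<close> a(1)] \<delta> unfolding T_def by auto
  have "\<exists>G\<in>sets mu. G \<subseteq> (\<Union>i\<in>J k. cball_d d (x i) ((2 * K + 1) * r i))
      \<and> K' * \<delta> k powr theta * m k / D^N * measure mu T \<le> measure mu (T \<inter> G)"
  proof (rule tube_mass_near_ball_family[OF d_metric cball_d_sets T(1,3) muF_sets muF_mass])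
    show "emeasure (muF u a) (F u a \<inter> cball_d d z (2 * s))
        \<le> ennreal D * emeasure (muF u a) (F u a \<inter> cball_d d z s)" if "z \<in> F u a" "0 < s" for z s
      using muF_doubling[OF \<open>u \<in> Y\<close> a(1) that] by (rule order_trans) (intro mult_right_mono ennreal_leI D(1), simp)
    show "K' * measure (muF u a) (F u a \<inter> cball_d d z (2 * \<delta> k)) * \<delta> k powr theta * measure mu T
        \<le> measure mu (T \<inter> cball_d d z (K * (2 * \<delta> k)))"
      if "z \<in> F u a" "0 < measure (muF u a) (F u a \<inter> cball_d d z (2 * \<delta> k))" for z
      using A2[OF \<open>u \<in> Y\<close> a(1) that(1), of "\<delta> k" "2 * \<delta> k"] that(2) \<delta>[of k] unfolding T_def by simp
  qed (use \<open>u \<in> Y\<close> a(1) D \<delta> K_ge_1 K'_pos band m(1) k in \<open>auto simp: U_def less_imp_le\<close>)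
  then obtain G where G: "G \<in> sets mu" "G \<subseteq> (\<Union>i\<in>J k. cball_d d (x i) ((2 * K + 1) * r i))"
    and mass: "K' * \<delta> k powr theta * m k / D^N * measure mu T \<le> measure mu (T \<inter> G)" by blast
  have "K' * \<delta> k powr theta * m k / (2 * D^N) < K' * \<delta> k powr theta * m k / D^N"
    using K'_pos \<delta>[of k] m(1)[of k] D(2) by (simp add: divide_strict_left_mono)
  with G mass T a(1) have "ennreal (K' * \<delta> k powr theta * m k / (2 * D^N))
      < kakeya_maximal mu d Par I (indicator (\<Union>i\<in>J k. cball_d d (x i) ((2 * K + 1) * r i))) (\<delta> k) u"
    using K'_pos \<delta>[of k] m(1)[of k] D(2) unfolding T_def
    by (intro kakeya_maximal_gt_of_tube_mass) auto
  then show "u \<in> (\<Union>k. {u \<in> Y. ennreal (K' * \<delta> k powr theta * m k / (2 * D^N))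
    < kakeya_maximal mu d Par I (indicator (\<Union>i\<in>J k. cball_d d (x i) ((2 * K + 1) * r i))) (\<delta> k) u})"
    using \<open>u \<in> Y\<close> by blast
qed


lemma level_cost_le:
  assumes "0 < \<delta>" "\<delta> \<le> r" "r \<le> 2 * \<delta>" "0 \<le> \<gamma>" "0 < \<kappa>" "0 < R"
    and "Q = s + (theta + beta) * p + \<gamma> * p"
  shows "ennreal (Cpb * (\<kappa> * (\<delta> powr theta * (2 * \<delta>) powr \<gamma>)) powr (- p) * \<delta> powr (- beta * p))
      * ennreal (C0 * (R * r) powr Q)
    \<le> ennreal (Cpb * C0 * R powr Q * \<kappa> powr (- p) * 2 powr ((theta + beta) * p) * r powr s)"
proof -
  have "(\<kappa> * (\<delta> powr theta * (2 * \<delta>) powr \<gamma>)) powr (- p) * \<delta> powr (- beta * p) * r powr Q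
      \<le> \<kappa> powr (- p) * 2 powr ((theta + beta) * p) * r powr s"
    using assms theta_nonneg beta_nonneg p_pos by (intro dyadic_weight_bound) auto
  then have "(Cpb * C0 * R powr Q) * ((\<kappa> * (\<delta> powr theta * (2 * \<delta>) powr \<gamma>)) powr (- p) * \<delta> powr (- beta * p) * r powr Q)
      \<le> (Cpb * C0 * R powr Q) * (\<kappa> powr (- p) * 2 powr ((theta + beta) * p) * r powr s)"
    using Cpb_nonneg C0_pos by (intro mult_left_mono) auto
  moreover have "(R * r) powr Q = R powr Q * r powr Q" using assms by (simp add: powr_mult)
  ultimately show ?thesis
    using Cpb_nonneg C0_pos by (simp add: ennreal_mult[symmetric] ac_simps)
qed


lemma band_cost_le:
  fixes x :: "nat \<Rightarrow> 'a"
  assumes band: "\<And>i. i \<in> J \<Longrightarrow> \<delta> \<le> r i \<and> r i \<le> 2 * \<delta>"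
    and radii: "\<And>i. i \<in> J \<Longrightarrow> ennreal (R * r i) < ediam d UNIV"
    and "0 < \<delta>" "0 \<le> \<gamma>" "0 < \<kappa>" "0 < R" and Q_eq: "Q = s + (theta + beta) * p + \<gamma> * p"
  shows "ennreal (Cpb * (\<kappa> * (\<delta> powr theta * (2 * \<delta>) powr \<gamma>)) powr (- p) * \<delta> powr (- beta * p))
      * emeasure mu (\<Union>i\<in>J. cball_d d (x i) (R * r i))
    \<le> (\<Sum>i. if i \<in> J then ennreal (Cpb * C0 * R powr Q * \<kappa> powr (- p) * 2 powr ((theta + beta) * p)
      * r i powr s) else 0)"
    (is "ennreal ?c * _ \<le> (\<Sum>i. if i \<in> J then ennreal (?A * r i powr s) else 0)")
proof -
  have "0 < R * r i \<and> ennreal (R * r i) < ediam d UNIV" if "i \<in> J" for i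
    using band[OF that] radii[OF that] \<open>0 < \<delta>\<close> \<open>0 < R\<close> by simp
  then have "emeasure mu (\<Union>i\<in>J. cball_d d (x i) (R * r i))
      \<le> (\<Sum>i. if i \<in> J then ennreal (C0 * (R * r i) powr Q) else 0)"
    by (rule emeasure_UN_cball_le)
  then have "ennreal ?c * emeasure mu (\<Union>i\<in>J. cball_d d (x i) (R * r i))
      \<le> (\<Sum>i. ennreal ?c * (if i \<in> J then ennreal (C0 * (R * r i) powr Q) else 0))"
    by (simp add: mult_left_mono)
  also have "\<dots> \<le> (\<Sum>i. if i \<in> J then ennreal (?A * r i powr s) else 0)"
  proof (intro suminf_le)
    fix i
    show "ennreal ?c * (if i \<in> J then ennreal (C0 * (R * r i) powr Q) else 0)
        \<le> (if i \<in> J then ennreal (?A * r i powr s) else 0)"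
    proof (cases "i \<in> J")
      case True
      with band level_cost_le[OF \<open>0 < \<delta>\<close> _ _ \<open>0 \<le> \<gamma>\<close> \<open>0 < \<kappa>\<close> \<open>0 < R\<close> Q_eq, of "r i"]
      show ?thesis by simp
    qed simp
  qed auto
  finally show ?thesis .
qed

text \<open>The band weights \<open>m_k = (1 - 2\<^sup>-\<^sup>\<gamma>)/2 \<cdot> (2\<delta>_k)\<^sup>\<gamma>\<close> sum to \<open>1/2\<close>, and the maximal estimate is
  applied in band \<open>k\<close> at level \<open>\<lambda>_k = \<kappa> \<delta>_k\<^sup>\<theta> (2\<delta>_k)\<^sup>\<gamma>\<close>; with \<open>\<gamma> p = Q - (\<beta> + \<theta>) p - s\<close> the
  cost \<open>\<lambda>_k\<^sup>-\<^sup>p \<delta>_k\<^sup>-\<^sup>\<beta>\<^sup>p r\<^sup>Q\<close> of a ball of radius \<open>r \<approx> \<delta>_k\<close> is then comparable to \<open>r\<^sup>s\<close>.\<close>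

lemma emeasure_Y_le_cover_sum:
  assumes kakeya: "generalized_kakeya mu Y Par F B" and "0 < \<gamma>"
    and Q_eq: "Q = s + (theta + beta) * p + \<gamma> * p"
  shows "\<exists>A\<ge>0. \<forall>x r. (\<forall>i. 0 < r i \<and> r i < 1 \<and> ennreal ((2 * K + 1) * r i) < ediam d UNIV)
    \<and> B \<subseteq> (\<Union>i::nat. cball_d d (x i) (r i)) \<longrightarrow> emeasure nu Y \<le> ennreal A * (\<Sum>i. ennreal (r i powr s))"
proof -
  define D where "D = max Cdb 1"
  obtain N :: nat where N: "4 * K \<le> 2^N" using real_arch_pow[of 2 "4 * K"] by (auto intro: less_imp_le)
  define R where "R = 2 * K + 1"
  define \<kappa> where "\<kappa> = K' * (1 - (1/2) powr \<gamma>) / (4 * D^N)"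
  define A where "A = Cpb * C0 * R powr Q * \<kappa> powr (- p) * 2 powr ((theta + beta) * p)"
  have "0 < R" "0 < \<kappa>" "0 \<le> A"
    using K_ge_1 K'_pos \<open>0 < \<gamma>\<close> Cpb_nonneg C0_pos powr01_less_one[of "1/2" \<gamma>]
    unfolding R_def \<kappa>_def A_def D_def by auto
  moreover have "emeasure nu Y \<le> ennreal A * (\<Sum>i. ennreal (r i powr s))"
    if r: "\<And>i. 0 < r i \<and> r i < 1 \<and> ennreal (R * r i) < ediam d UNIV"
      and cover: "B \<subseteq> (\<Union>i. cball_d d (x i) (r i))" for x :: "nat \<Rightarrow> 'a" and r
proof -
    define \<delta> where "\<delta> k = (1/2::real)^Suc k" for k
    define J where "J k = {i. \<delta> k \<le> r i \<and> r i < 2 * \<delta> k}" for k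
    define m where "m k = (1 - (1/2) powr \<gamma>) / 2 * (2 * \<delta> k) powr \<gamma>" for k
    define E where "E k = (\<Union>i\<in>J k. cball_d d (x i) (R * r i))" for k
    define lam where "lam k = \<kappa> * (\<delta> k powr theta * (2 * \<delta> k) powr \<gamma>)" for k
    have \<delta>: "0 < \<delta> k \<and> \<delta> k < 1" for k
      unfolding \<delta>_def using power_strict_decreasing[of 0 "Suc k" "1/2::real"] by auto
    have J: "\<exists>!k. i \<in> J k" for i
      using dyadic_band_ex1[of "r i"] r[of i] unfolding J_def \<delta>_def by auto
    have lam: "lam k = K' * \<delta> k powr theta * m k / (2 * D^N)" for k
      unfolding lam_def \<kappa>_def m_def by (simp add: field_simps)
    have lam_pos: "0 < lam k" for k
      using \<delta>[of k] \<open>0 < \<kappa>\<close> unfolding lam_def by simp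
    have "(\<Sum>k. ennreal (m k)) = ennreal (1/2)"
      using suminf_dyadic_weights[OF \<open>0 < \<gamma>\<close>] unfolding m_def \<delta>_def .
    also have "\<dots> < 1" by (subst ennreal_1[symmetric], subst ennreal_less_iff) auto
    finally have "(\<Sum>k. ennreal (m k)) < 1" .
    moreover have "0 < m k" for k
      using \<delta>[of k] powr01_less_one[of "1/2" \<gamma>] \<open>0 < \<gamma>\<close> unfolding m_def by simp
    ultimately have "Y \<subseteq> (\<Union>k. {u \<in> Y. ennreal (lam k) < kakeya_maximal mu d Par I (indicator (E k)) (\<delta> k) u})"
      using ex1_implies_ex[OF J] \<delta> N unfolding lam E_def R_def D_def J_def
      by (intro superlevel_sets_cover[OF kakeya cover]) auto
    then have "emeasure nu Y \<le> (\<Sum>k. ennreal (Cpb * lam k powr (- p) * \<delta> k powr (- beta * p)) * emeasure mu (E k))"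
      using \<delta> lam_pos unfolding E_def by (intro emeasure_Y_le_superlevel_sum) (auto simp: cball_d_sets)
    also have "\<dots> \<le> (\<Sum>k. \<Sum>i. if i \<in> J k then ennreal (A * r i powr s) else 0)"
      using \<delta> r \<open>0 < \<gamma>\<close> \<open>0 < \<kappa>\<close> \<open>0 < R\<close> unfolding E_def lam_def A_def J_def
      by (intro suminf_le band_cost_le[OF _ _ _ _ _ _ Q_eq]) auto
    also have "\<dots> = ennreal A * (\<Sum>i. ennreal (r i powr s))"
      using suminf_ennreal_partition[OF J] \<open>0 \<le> A\<close> by (simp add: ennreal_mult)
    finally show ?thesis .
  qed
  ultimately show ?thesis unfolding R_def by blast
qed

lemma hausdorff_null_exponent_ge:
  assumes kakeya: "generalized_kakeya mu Y Par F B" and "0 < s" and null: "hausdorff_measure d s B = 0"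
  shows "Q - (beta + theta) * p \<le> s"
proof (rule ccontr)
  assume "\<not> Q - (beta + theta) * p \<le> s"
  define \<gamma> where "\<gamma> = (Q - (beta + theta) * p - s) / p"
  have "0 < \<gamma>" using \<open>\<not> Q - (beta + theta) * p \<le> s\<close> p_pos unfolding \<gamma>_def by simp
  have "\<gamma> * p = Q - (beta + theta) * p - s" using p_pos unfolding \<gamma>_def by simp
  then have "Q = s + (theta + beta) * p + \<gamma> * p" by (simp add: algebra_simps)
  from emeasure_Y_le_cover_sum[OF kakeya \<open>0 < \<gamma>\<close> this]
  obtain A where "0 \<le> A" and A: "\<And>x r. (\<forall>i. 0 < r i \<and> r i < 1 \<and> ennreal ((2 * K + 1) * r i) < ediam d UNIV)
    \<and> B \<subseteq> (\<Union>i::nat. cball_d d (x i) (r i)) \<Longrightarrow> emeasure nu Y \<le> ennreal A * (\<Sum>i. ennreal (r i powr s))"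
    by blast
  obtain L where L: "0 < L" "ennreal L \<le> ediam d UNIV"
    using kakeya_ex_ediam_lower_bound[OF kakeya] by blast
  define R where "R = 2 * K + 1"
  define y where "y = enn2real (emeasure nu Y)"
  have y: "emeasure nu Y = ennreal y" "0 < y"
    using nu_Y unfolding y_def by (auto simp: enn2real_positive_iff less_top)
  have "0 < R" using K_ge_1 unfolding R_def by simp
  have "\<exists>x r. (\<forall>i. 0 < r i \<and> r i \<le> min (1/2) (L / (2 * R))) \<and> B \<subseteq> (\<Union>i::nat. cball_d d (x i) (r i))
      \<and> (\<Sum>i. ennreal (r i powr s)) \<le> ennreal (y / (2 * A + 1))"
    using L(1) y(2) \<open>0 < R\<close> \<open>0 \<le> A\<close>
    by (intro hausdorff_null_cball_cover[OF d_metric null \<open>0 < s\<close>]) auto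
  then obtain x r where r: "\<And>i. 0 < r i \<and> r i \<le> min (1/2) (L / (2 * R))"
    and cover: "B \<subseteq> (\<Union>i. cball_d d (x i) (r i))"
    and sum_r: "(\<Sum>i. ennreal (r i powr s)) \<le> ennreal (y / (2 * A + 1))"
    by blast
  have "0 < r i \<and> r i < 1 \<and> ennreal ((2 * K + 1) * r i) < ediam d UNIV" for i
proof -
    have "R * r i < L"
      using r[of i] \<open>0 < R\<close> mult_left_mono[of "r i" "L / (2 * R)" R] L(1) by auto
    then have "ennreal (R * r i) < ennreal L" using L(1) by (simp add: ennreal_lessI)
    then have "ennreal (R * r i) < ediam d UNIV" using L(2) by (rule order_less_le_trans)
    then show ?thesis using r[of i] unfolding R_def by simp
  qed
  then have "emeasure nu Y \<le> ennreal A * (\<Sum>i. ennreal (r i powr s))"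
    using cover by (intro A[of r x]) blast
  also have "\<dots> \<le> ennreal A * ennreal (y / (2 * A + 1))"
    using sum_r by (rule mult_left_mono) simp
  also have "\<dots> = ennreal (A * (y / (2 * A + 1)))"
    using \<open>0 \<le> A\<close> y(2) by (intro ennreal_mult[symmetric]) auto
  finally have "y \<le> A * (y / (2 * A + 1))" using y \<open>0 \<le> A\<close> by simp
  moreover have "A * (y / (2 * A + 1)) < y"
    using y(2) \<open>0 \<le> A\<close> by (simp add: field_simps add_pos_nonneg)
  ultimately show False by simp
qed

lemma hausdorff_dim_kakeya_ge:
  assumes "generalized_kakeya mu Y Par F B"
  shows "ereal (Q - (beta + theta) * p) \<le> hausdorff_dim d B"
  unfolding hausdorff_dim_def
  using hausdorff_null_exponent_ge[OF assms] by (auto intro!: Inf_greatest)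

end

theorem mainTheorem3:
  fixes d d' :: "'a \<Rightarrow> 'a \<Rightarrow> real"
    and mu :: "'a measure"
    and dZ :: "'z \<Rightarrow> 'z \<Rightarrow> real"
    and Y :: "'z set"
    and nu :: "'z measure"
    and Par :: "'p set"
    and F I It :: "'z \<Rightarrow> 'p \<Rightarrow> 'a set"
    and muF :: "'z \<Rightarrow> 'p \<Rightarrow> 'a measure"
    and Q C0 S c0t C0t c c' cbar Cdb T c1 c2 W theta K' K b Nbar p beta Cpb :: real
  assumes
    \<comment> \<open>(X,d): complete separable metric space with upper Q-regular Borel measure mu\<close>
    d_metric: "Metric_space UNIV d"
    and d_complete: "Metric_space.mcomplete UNIV d"
    and d_separable: "separable_space (Metric_space.mtopology UNIV d)"
    and mu_borel: "sets mu = sets (metric_borel d)"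
    and Q_gt: "Q > 1/2" and C0_pos: "0 < C0"
    and mu_upper: "\<And>x r. 0 < r \<Longrightarrow> ennreal r < ediam d UNIV \<Longrightarrow>
                        emeasure mu (cball_d d x r) \<le> ennreal (C0 * r powr Q)"
    and d'_metric: "Metric_space UNIV d'"
    and d'_separable: "separable_space (Metric_space.mtopology UNIV d')"
    \<comment> \<open>(Z,dZ), compact Y, measure nu, S-regular on Y\<close>
    and dZ_metric: "Metric_space UNIV dZ"
    and Y_compact: "compactin (Metric_space.mtopology UNIV dZ) Y"
    and nu_borel: "sets nu = sets (metric_borel dZ)"
    and nu_Y: "0 < emeasure nu Y" "emeasure nu Y \<le> 1"
    and S_bounds: "1 \<le> S" "S < 2 * Q"
    and c0t_C0t: "0 < c0t" "c0t \<le> C0t"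
    and nu_regular: "\<And>u r. u \<in> Y \<Longrightarrow> 0 < r \<Longrightarrow> ennreal r < ediam dZ Y \<Longrightarrow>
          ennreal (c0t * r powr S) \<le> emeasure nu (cball_d dZ u r) \<and>
          emeasure nu (cball_d dZ u r) \<le> ennreal (C0t * r powr S)"
    \<comment> \<open>the sets F, I, tilde I and the measures mu_{u,a}\<close>
    and c_bounds: "0 < c" "c \<le> c'" "1 \<le> cbar"
    and FI: "\<And>u a. u \<in> Y \<Longrightarrow> a \<in> Par \<Longrightarrow> F u a \<subseteq> I u a \<and> I u a \<subseteq> It u a"
    and diam_I: "\<And>u a. u \<in> Y \<Longrightarrow> a \<in> Par \<Longrightarrow>
          ennreal c \<le> ediam d' (I u a) \<and> ediam d' (I u a) \<le> ennreal c'"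
    and diam_It: "\<And>u a. u \<in> Y \<Longrightarrow> a \<in> Par \<Longrightarrow>
          ediam d' (It u a) \<le> ennreal cbar * ediam d' (I u a)"
    and muF_sets: "\<And>u a. u \<in> Y \<Longrightarrow> a \<in> Par \<Longrightarrow>
          sets (muF u a) = sets (restrict_space (metric_borel d) (F u a))"
    and muF_mass: "\<And>u a. u \<in> Y \<Longrightarrow> a \<in> Par \<Longrightarrow> emeasure (muF u a) (F u a) = 1"
    and muF_doubling: "\<And>u a x r. u \<in> Y \<Longrightarrow> a \<in> Par \<Longrightarrow> x \<in> F u a \<Longrightarrow> 0 < r \<Longrightarrow>
          emeasure (muF u a) (F u a \<inter> cball_d d x (2 * r))
            \<le> ennreal Cdb * emeasure (muF u a) (F u a \<inter> cball_d d x r)"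
    \<comment> \<open>(A1)\<close>
    and A1_cont: "\<And>a delta. a \<in> Par \<Longrightarrow> 0 < delta \<Longrightarrow> delta < 1 \<Longrightarrow>
          continuous_map (subtopology (Metric_space.mtopology UNIV dZ) Y) euclideanreal
            (\<lambda>u. measure mu (tube d I delta u a))"
    and A1_T: "S / 2 < T" "T < Q" and A1_c: "0 < c1" "c1 \<le> c2"
    and A1_bounds: "\<And>u a delta. u \<in> Y \<Longrightarrow> a \<in> Par \<Longrightarrow> 0 < delta \<Longrightarrow> delta < 1 \<Longrightarrow>
          ennreal (c1 * delta powr T) \<le> emeasure mu (tube d I delta u a) \<and>
          emeasure mu (tube d I delta u a) \<le> emeasure mu (tube d It (W * delta) u a) \<and>
          emeasure mu (tube d It (W * delta) u a) \<le> ennreal (c2 * delta powr T)"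
    and A1_diam: "\<And>u a delta A. u \<in> Y \<Longrightarrow> a \<in> Par \<Longrightarrow> 0 < delta \<Longrightarrow> delta < 1 \<Longrightarrow>
          A \<subseteq> tube d It (W * delta) u a \<Longrightarrow>
          outer_measure_of mu A \<le> ennreal c2 * ediam d' A * ennreal (delta powr T)"
    \<comment> \<open>(A2)\<close>
    and A2_theta: "0 \<le> theta" "theta < (2 * Q - 2 * T + S) / (S + 2)"
    and A2_K: "0 < K'" "1 \<le> K"
    and A2: "\<And>u a x delta r. u \<in> Y \<Longrightarrow> a \<in> Par \<Longrightarrow> x \<in> F u a \<Longrightarrow>
          0 < delta \<Longrightarrow> delta < 1 \<Longrightarrow> delta \<le> r \<Longrightarrow> r \<le> 2 * delta \<Longrightarrow>
          measure (muF u a) (F u a \<inter> cball_d d x r) > 0 \<Longrightarrow>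
          measure mu (tube d I delta u a \<inter> cball_d d x (K * r))
            \<ge> K' * measure (muF u a) (F u a \<inter> cball_d d x r) * delta powr theta
                 * measure mu (tube d I delta u a)"
    \<comment> \<open>(A3)\<close>
    and A3_b: "0 < b"
    and A3: "\<And>u v a a' delta. u \<in> Y \<Longrightarrow> v \<in> Y \<Longrightarrow> u \<noteq> v \<Longrightarrow> a \<in> Par \<Longrightarrow> a' \<in> Par \<Longrightarrow>
          0 < delta \<Longrightarrow> delta < 1 \<Longrightarrow>
          ediam d' (tube d It (W * delta) u a \<inter> tube d It (W * delta) v a')
            \<le> ennreal (b * delta / dZ u v)"
    \<comment> \<open>(A4)\<close>
    and A4_W: "0 < W" "0 < Nbar"
    and A4: "\<And>u v a delta. u \<in> Y \<Longrightarrow> v \<in> Y \<Longrightarrow> a \<in> Par \<Longrightarrow> 0 < delta \<Longrightarrow> delta < 1 \<Longrightarrow>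
          dZ u v \<le> delta \<Longrightarrow>
          \<exists>Bs. finite Bs \<and> Bs \<subseteq> Par \<and> real (card Bs) \<le> Nbar \<and>
               tube d I delta u a \<subseteq> (\<Union>b'\<in>Bs. tube d It (W * delta) v b')"
    \<comment> \<open>the maximal function estimate\<close>
    and p_beta: "1 \<le> p" "0 < beta" "Q - (beta + theta) * p > 0" "0 < Cpb"
    and maximal_est: "\<And>E lam delta. E \<in> sets (completion mu) \<Longrightarrow> 0 < lam \<Longrightarrow>
          0 < delta \<Longrightarrow> delta < 1 \<Longrightarrow>
          outer_measure_of nu {u \<in> Y. kakeya_maximal mu d Par I (indicator E) delta u > ennreal lam}
            \<le> ennreal (Cpb * lam powr (- p) * delta powr (- beta * p)) * emeasure (completion mu) E"
  shows "\<forall>B. generalized_kakeya mu Y Par F B \<longrightarrow>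
           hausdorff_dim d B \<ge> ereal (Q - (beta + theta) * p)"
proof -
  have tube_measure: "tube d I \<delta> u a \<in> sets mu \<and> 0 < measure mu (tube d I \<delta> u a)
      \<and> emeasure mu (tube d I \<delta> u a) \<noteq> \<infinity>"
    if "u \<in> Y" "a \<in> Par" "0 < \<delta>" "\<delta> < 1" for u a \<delta>
    using A1_bounds[OF that] A1_c(1) \<open>0 < \<delta>\<close>
    by (intro measurable_of_emeasure_bounds[of "c1 * \<delta> powr T" _ _ "c2 * \<delta> powr T"]) auto
  have Y_sets: "Y \<in> sets nu" using nu_Y(1) emeasure_notin_sets by fastforce
  have nu_Y_finite: "emeasure nu Y \<noteq> \<infinity>" using nu_Y(2) neq_top_trans[of 1] by auto
  have "0 < p" "0 \<le> beta" "0 \<le> Cpb" using p_beta by auto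
  then interpret kakeya_maximal_setting d mu Y nu Par F I muF Q C0 Cdb theta K' K p beta Cpb
    by (intro kakeya_maximal_setting.intro[OF d_metric mu_borel mu_upper C0_pos Y_sets nu_Y(1)
        nu_Y_finite muF_sets muF_mass muF_doubling tube_measure A2_theta(1) A2_K A2 _ _ _ maximal_est])
  show ?thesis using hausdorff_dim_kakeya_ge by blast
qed

end
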